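(* As $s\to 1^+$ (real $s$), $$\lim_{s\to1^+}(s-1)\prod_{p\equiv 1,2,4 \pmod 7}\left(1-\frac{1}{p^s}\right)^{-2}=\frac{3\sqrt7}{4\pi}\prod_{p\equiv 1,2,4\pmod 7}\left(1-\frac{1}{p^2}\right)^{-1},$$ where the products are over primes $p$ congruent to $1$, $2$ or $4$ modulo $7$. *)

theory Defs
  imports "HOL-Analysis.Analysis"
begin

end

theory Submission
  imports Defs
begin

text \<open>Let \<open>chi\<close> be the Legendre symbol modulo 7 and \<open>B(t)\<close> the Euler product of
  \<open>(1 - p^-t)^-1\<close> over the primes \<open>p = 3, 5, 6 (mod 7)\<close>. Comparing Euler factors prime by prime,
  for \<open>s > 1\<close> the product on the left equals \<open>zeta(s) L(s, chi) (1 - 7^-s) / B(2s)\<close>: a residue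
  prime occurs once in \<open>zeta\<close> and once in \<open>L\<close>, while for a nonresidue prime
  \<open>(1 - p^-s)(1 + p^-s) = 1 - p^-2s\<close>. Likewise the product on the right is
  \<open>zeta(2) (1 - 7^-2) / B(2)\<close>. As \<open>s \<rightarrow> 1+\<close>, \<open>(s - 1) zeta(s) \<rightarrow> 1\<close>, \<open>B\<close> is continuous
  at \<open>2\<close>, and \<open>L(1, chi) = pi / sqrt 7\<close> by the partial fraction expansion of \<open>pi cot (pi x)\<close>
  together with \<open>cot (pi/7) + cot (2 pi/7) - cot (3 pi/7) = sqrt 7\<close>; with \<open>zeta(2) = pi^2/6\<close>
  the two constants agree.\<close>

section \<open>Two cotangent identities\<close>

lemma rGamma_reflection_real: "rGamma (x::real) * rGamma (1 - x) = sin (pi * x) / pi"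
proof -
  have "rGamma (complex_of_real x) * rGamma (1 - complex_of_real x) = sin (of_real pi * of_real x) / of_real pi"
    by (rule rGamma_reflection_complex)
  also have "1 - complex_of_real x = of_real (1 - x)" by simp
  finally have "complex_of_real (rGamma x * rGamma (1 - x)) = complex_of_real (sin (pi * x) / pi)"
    by (simp only: rGamma_complex_of_real sin_of_real flip: of_real_mult of_real_divide)
  thus ?thesis by (simp only: of_real_eq_iff)
qed

text \<open>Differentiate the reflection formula for \<open>rGamma\<close>.\<close>
lemma Digamma_reflection_real:
  fixes x :: real
  assumes "x \<notin> \<int>"
  shows "Digamma (1 - x) - Digamma x = pi * cot (pi * x)"
proof -
  have "x \<notin> \<int>\<^sub>\<le>\<^sub>0" "1 - x \<notin> \<int>\<^sub>\<le>\<^sub>0"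
    using assms nonpos_Ints_subset_Ints Ints_diff[of 1 "1 - x"] by auto
  hence "((\<lambda>y. rGamma y * rGamma (1 - y)) has_real_derivative
           rGamma x * rGamma (1 - x) * (Digamma (1 - x) - Digamma x)) (at x)"
    by (auto intro!: derivative_eq_intros simp: algebra_simps)
  moreover have "((\<lambda>y. rGamma y * rGamma (1 - y)) has_real_derivative cos (pi * x)) (at x)"
    unfolding rGamma_reflection_real by (auto intro!: derivative_eq_intros)
  ultimately have "sin (pi * x) / pi * (Digamma (1 - x) - Digamma x) = cos (pi * x)"
    by (metis DERIV_unique rGamma_reflection_real)
  moreover have "sin (pi * x) \<noteq> 0"
    using assms by (auto simp: sin_zero_iff_int2)
  ultimately show ?thesis by (simp add: cot_def field_simps)
qed

lemma pi_cot_partial_fractions: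
  fixes x :: real
  assumes "0 < x" "x < 1"
  shows "(\<lambda>k. 1 / (real k + x) - 1 / (real k + (1 - x))) sums (pi * cot (pi * x))"
proof -
  have "(\<lambda>n. (inverse (real (Suc n)) - inverse ((1 - x) + real n))
            - (inverse (real (Suc n)) - inverse (x + real n)))
          sums ((\<Sum>n. inverse (real (Suc n)) - inverse ((1 - x) + real n))
                - (\<Sum>n. inverse (real (Suc n)) - inverse (x + real n)))"
    using assms by (intro sums_diff summable_sums summable_Digamma) auto
  also have "\<dots> = Digamma (1 - x) - Digamma x"
    by (simp add: Digamma_def)
  finally have "(\<lambda>n. inverse (x + real n) - inverse ((1 - x) + real n)) sums (Digamma (1 - x) - Digamma x)"
    by simp
  moreover have "x \<notin> \<int>"
    using assms by (auto elim!: Ints_cases)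
  ultimately show ?thesis
    by (simp add: Digamma_reflection_real divide_inverse add.commute)
qed

lemma cos_pi_sevenths_cubic: "8 * cos (pi/7)^3 - 4 * cos (pi/7)^2 - 4 * cos (pi/7) + 1 = 0"
proof -
  define c where "c = cos (pi/7)"
  have "cos (4 * (pi/7)) = - cos (3 * (pi/7))"
    using cos_diff[of pi "3 * (pi/7)"] by (simp add: field_simps)
  moreover have "cos (4 * (pi/7)) = 2 * (2 * c^2 - 1)^2 - 1"
    using cos_double_cos[of "2 * (pi/7)"] cos_double_cos[of "pi/7"] by (simp add: c_def mult.assoc)
  moreover have "cos (3 * (pi/7)) = 4 * c^3 - 3 * c"
    using cos_treble_cos[of "pi/7"] by (simp add: c_def)
  ultimately have "(c + 1) * (8 * c^3 - 4 * c^2 - 4 * c + 1) = 0" by algebra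
  moreover have "c > 0"
    unfolding c_def by (intro cos_gt_zero_pi) (use pi_gt_zero in linarith)+
  ultimately show ?thesis by (simp add: c_def)
qed

text \<open>With \<open>c = cos (pi/7)\<close> the sum is a rational function of \<open>c\<close> times \<open>1 / sin (pi/7)\<close>;
  its square reduces to \<open>7\<close> modulo the cubic satisfied by \<open>c\<close>.\<close>
lemma cot_pi_sevenths: "cot (pi/7) + cot (2 * pi/7) - cot (3 * pi/7) = sqrt 7"
proof -
  define c where "c = cos (pi/7)"
  define s where "s = sin (pi/7)"
  have s2: "sin (2 * pi/7) = 2 * s * c" and c2: "cos (2 * pi/7) = 2 * c^2 - 1"
    using sin_double[of "pi/7"] cos_double_cos[of "pi/7"] by (simp_all add: s_def c_def)
  have "sin (3 * pi/7) = sin (2 * pi/7 + pi/7)" by (simp add: field_simps)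
  also have "\<dots> = 2 * s * c * c + (2 * c^2 - 1) * s"
    unfolding sin_add s2 c2 by (simp add: s_def c_def)
  finally have s3: "sin (3 * pi/7) = s * (4 * c^2 - 1)"
    by (simp add: algebra_simps power2_eq_square)
  have c3: "cos (3 * pi/7) = 4 * c^3 - 3 * c"
    using cos_treble_cos[of "pi/7"] by (simp add: c_def)
  have s_pos: "s > 0"
    unfolding s_def by (intro sin_gt_zero) (use pi_gt_zero in simp)+
  have "cos (pi/3) < cos (pi/7)"
    using pi_gt_zero by (subst cos_mono_less_eq) auto
  hence c_gt: "c > 1/2"
    by (simp add: c_def cos_60)
  hence d_pos: "4 * c^2 - 1 > 0"
    using power_strict_mono[of "1/2" c 2] by (simp add: power_divide)
  define S where "S = cot (pi/7) + cot (2 * pi/7) - cot (3 * pi/7)"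
  have S: "S = (8 * c^4 - 2 * c^2 + 1) / (2 * c * (4 * c^2 - 1) * s)"
    unfolding S_def cot_def s2 c2 s3 c3 using s_pos c_gt d_pos
    by (simp add: c_def[symmetric] s_def[symmetric] field_simps)
       (simp add: algebra_simps power2_eq_square power3_eq_cube power4_eq_xxxx eval_nat_numeral)
  have "8 * c^4 - 2 * c^2 + 1 = 7 * c^4 + (c^2 - 1)^2"
    by (simp add: algebra_simps power2_eq_square power4_eq_xxxx)
  moreover have "7 * c^4 > 0"
    using c_gt by simp
  ultimately have "8 * c^4 - 2 * c^2 + 1 > 0"
    by (metis add_pos_nonneg zero_le_power2)
  hence "S > 0"
    unfolding S using c_gt d_pos s_pos by (intro divide_pos_pos mult_pos_pos) auto
  moreover have "(8 * c^4 - 2 * c^2 + 1)^2 = 7 * (2 * c * (4 * c^2 - 1))^2 * s^2"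
    using cos_pi_sevenths_cubic unfolding c_def[symmetric] s_def sin_squared_eq by algebra
  hence "S^2 = 7"
    unfolding S using c_gt d_pos s_pos by (simp add: power_divide power_mult_distrib)
  ultimately show ?thesis
    unfolding S_def by (intro real_sqrt_unique[symmetric]) auto
qed

lemma powr_diff_mean_value:
  fixes x y a :: real
  assumes "0 < x" "x < y"
  obtains z where "x < z" "z < y" "y powr a - x powr a = (y - x) * a * z powr (a - 1)"
proof -
  have "\<exists>z. x < z \<and> z < y \<and> y powr a - x powr a = (y - x) * (a * z powr (a - 1))"
    using assms by (intro MVT2) (auto intro!: derivative_eq_intros)
  with that show ?thesis by (auto simp: mult.assoc)
qed

lemma inverse_powr_diff_bounds:
  fixes x d s :: real
  assumes "1 \<le> x" "0 \<le> d" "1 \<le> s" "s \<le> 2"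
  shows "0 \<le> 1 / x powr s - 1 / (x + d) powr s" "1 / x powr s - 1 / (x + d) powr s \<le> 2 * d / x^2"
proof -
  have "0 \<le> 1 / x powr s - 1 / (x + d) powr s \<and> 1 / x powr s - 1 / (x + d) powr s \<le> 2 * d / x^2"
  proof (cases "d = 0")
    case False
    then obtain z where z: "x < z" "z < x + d"
      and eq: "(x + d) powr (-s) - x powr (-s) = d * (-s) * z powr (-s - 1)"
      using powr_diff_mean_value[of x "x + d" "-s"] assms by auto
    have "z powr (-s - 1) \<le> z powr (-2)"
      using assms z by (intro powr_mono) auto
    also have "\<dots> \<le> x powr (-2)"
      using assms z by (intro powr_mono2') auto
    also have "\<dots> = 1 / x^2"
      using assms by (simp add: powr_minus_divide powr_numeral)
    finally have "d * s * z powr (-s - 1) \<le> 2 * d / x^2"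
      using mult_mono[of "d * s" "d * 2" "z powr (-s - 1)" "1 / x^2"] assms
      by (simp add: mult_left_mono mult.commute)
    moreover have "0 \<le> d * s * z powr (-s - 1)"
      using assms by simp
    moreover have "1 / x powr s - 1 / (x + d) powr s = d * s * z powr (-s - 1)"
      using eq by (simp add: powr_minus_divide)
    ultimately show ?thesis
      by simp
  qed simp
  thus "0 \<le> 1 / x powr s - 1 / (x + d) powr s" "1 / x powr s - 1 / (x + d) powr s \<le> 2 * d / x^2"
    by auto
qed

lemma powr_one_minus_diff_bounds:
  fixes x s :: real
  assumes "1 \<le> x" "1 < s"
  shows "(s - 1) / (x + 1) powr s \<le> x powr (1 - s) - (x + 1) powr (1 - s)"
    and "x powr (1 - s) - (x + 1) powr (1 - s) \<le> (s - 1) / x powr s"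
proof -
  obtain z where z: "x < z" "z < x + 1"
    and eq: "(x + 1) powr (1 - s) - x powr (1 - s) = 1 * (1 - s) * z powr (1 - s - 1)"
    using powr_diff_mean_value[of x "x + 1" "1 - s"] assms by auto
  have "x powr (1 - s) - (x + 1) powr (1 - s) = - ((1 - s) / z powr s)"
    using eq by (simp add: powr_minus_divide)
  hence "x powr (1 - s) - (x + 1) powr (1 - s) = (s - 1) / z powr s"
    by (simp add: minus_divide_left)
  moreover have "z powr s \<le> (x + 1) powr s" "x powr s \<le> z powr s"
    using assms z by (auto intro!: powr_mono2)
  ultimately show "(s - 1) / (x + 1) powr s \<le> x powr (1 - s) - (x + 1) powr (1 - s)"
    and "x powr (1 - s) - (x + 1) powr (1 - s) \<le> (s - 1) / x powr s"
    using assms z by (auto intro!: divide_left_mono mult_pos_pos)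
qed

lemma continuous_on_suminf:
  fixes f :: "nat \<Rightarrow> real \<Rightarrow> real"
  assumes "\<And>n x. x \<in> A \<Longrightarrow> \<bar>f n x\<bar> \<le> M n" "summable M" "\<And>n. continuous_on A (f n)"
  shows "continuous_on A (\<lambda>x. \<Sum>n. f n x)"
proof (rule uniform_limit_theorem[where F = sequentially])
  show "uniform_limit A (\<lambda>n x. \<Sum>i<n. f i x) (\<lambda>x. \<Sum>n. f n x) sequentially"
    using assms by (intro Weierstrass_m_test) auto
  show "\<forall>\<^sub>F n in sequentially. continuous_on A (\<lambda>x. \<Sum>i<n. f i x)"
    using assms(3) by (intro always_eventually allI continuous_on_sum) auto
qed auto

text \<open>The term \<open>n = 0\<close> vanishes: \<open>0 powr s = 0\<close> and division by \<open>0\<close> gives \<open>0\<close>.\<close>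
definition dirichlet_series :: "(nat \<Rightarrow> real) \<Rightarrow> real \<Rightarrow> real" where
  "dirichlet_series f s = (\<Sum>n. f n / real n powr s)"

abbreviation zeta :: "real \<Rightarrow> real" where
  "zeta \<equiv> dirichlet_series (\<lambda>_. 1)"

lemma summable_inverse_powr: "s > 1 \<Longrightarrow> summable (\<lambda>n. 1 / real n powr s)"
  using summable_real_powr_iff[of "-s"] by (simp add: powr_minus_divide)

lemma abs_dirichlet_term_le:
  assumes "\<bar>f n\<bar> \<le> 1"
  shows "\<bar>f n / real n powr s\<bar> \<le> 1 / real n powr s"
  using assms by (simp add: abs_divide divide_right_mono)

lemma summable_abs_dirichlet_terms:
  assumes "\<And>n. \<bar>f n\<bar> \<le> 1" "s > 1"
  shows "summable (\<lambda>n. \<bar>f n / real n powr s\<bar>)"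
  by (rule summable_comparison_test[OF _ summable_inverse_powr[OF assms(2)]])
     (use abs_dirichlet_term_le[of f, OF assms(1)] in \<open>auto intro!: exI[of _ 0]\<close>)

lemma isCont_dirichlet_series:
  assumes "\<And>n. \<bar>f n\<bar> \<le> 1" "s > 1"
  shows "isCont (dirichlet_series f) s"
proof -
  define a where "a = (1 + s) / 2"
  have a: "1 < a" "a < s" using assms(2) by (simp_all add: a_def)
  have "continuous_on {a..s + 1} (dirichlet_series f)"
    unfolding dirichlet_series_def[abs_def]
  proof (rule continuous_on_suminf[OF _ summable_inverse_powr[OF a(1)]])
    show "\<bar>f n / real n powr t\<bar> \<le> 1 / real n powr a" if "t \<in> {a..s + 1}" for n t
    proof (cases "n = 0")
      case False
      have "1 / real n powr t \<le> 1 / real n powr a"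
        using False that by (intro divide_left_mono powr_mono mult_pos_pos) auto
      with abs_dirichlet_term_le[of f, OF assms(1)] show ?thesis by (rule order_trans)
    qed simp
    show "continuous_on {a..s + 1} (\<lambda>t. f n / real n powr t)" for n
      by (cases "n = 0") (auto intro!: continuous_intros)
  qed
  thus ?thesis
    using a by (intro continuous_on_interior[of "{a..s + 1}"]) auto
qed

section \<open>The value \<open>L(1, chi)\<close> for the Legendre symbol modulo 7\<close>

text \<open>The Legendre symbol \<open>(n/7)\<close>; the squares modulo 7 are 1, 2 and 4.\<close>
definition chi7 :: "nat \<Rightarrow> real" where
  "chi7 n = (if n mod 7 \<in> {1, 2, 4} then 1 else if n mod 7 \<in> {3, 5, 6} then -1 else 0)"

lemma less_7_cases: "(a::nat) < 7 \<Longrightarrow> a = 0 \<or> a = 1 \<or> a = 2 \<or> a = 3 \<or> a = 4 \<or> a = 5 \<or> a = 6"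
  by arith

lemma chi7_mod [simp]: "chi7 (n mod 7) = chi7 n"
  by (simp add: chi7_def)

lemma chi7_mult: "chi7 (m * n) = chi7 m * chi7 n"
proof -
  have "chi7 (a * b) = chi7 a * chi7 b" if "a < 7" "b < 7" for a b
    using less_7_cases[OF that(1)] less_7_cases[OF that(2)] by (elim disjE; simp add: chi7_def)
  thus ?thesis
    by (metis chi7_mod mod_less_divisor mod_mult_eq zero_less_numeral)
qed

lemma abs_chi7_le: "\<bar>chi7 n\<bar> \<le> 1"
  by (simp add: chi7_def)

text \<open>Grouping the terms by periods gives a series converging uniformly for \<open>1 \<le> s \<le> 2\<close>,
  so its sum is continuous at \<open>s = 1\<close>, where the series itself is only conditionally convergent.\<close>
definition chi7_block :: "real \<Rightarrow> nat \<Rightarrow> real" where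
  "chi7_block s k = (\<Sum>n\<in>{k * 7..<k * 7 + 7}. chi7 n / real n powr s)"

lemma chi7_block_eq:
  "chi7_block s k = 1 / real (7 * k + 1) powr s + 1 / real (7 * k + 2) powr s
     - 1 / real (7 * k + 3) powr s + 1 / real (7 * k + 4) powr s
     - 1 / real (7 * k + 5) powr s - 1 / real (7 * k + 6) powr s"
proof -
  have "chi7_block s k = (\<Sum>j<7. chi7 (k * 7 + j) / real (k * 7 + j) powr s)"
    unfolding chi7_block_def
    using sum.shift_bounds_nat_ivl[of "\<lambda>n. chi7 n / real n powr s" 0 "k * 7" 7]
    by (simp add: atLeast0LessThan add.commute)
  also have "\<dots> = (\<Sum>j<7. chi7 j / real (7 * k + j) powr s)"
    by (intro sum.cong refl) (metis chi7_mod mod_mult_self3 mult.commute)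
  also have "\<dots> = (\<Sum>j\<in>{0, 1, 2, 3, 4, 5, 6}. chi7 j / real (7 * k + j) powr s)"
    by (intro sum.cong) auto
  finally show ?thesis
    by (simp add: chi7_def ac_simps)
qed

lemma chi7_block_sums: "s > 1 \<Longrightarrow> chi7_block s sums dirichlet_series chi7 s"
  unfolding chi7_block_def[abs_def] dirichlet_series_def
  by (intro sums_group summable_sums summable_rabs_cancel[OF summable_abs_dirichlet_terms])
     (auto simp: abs_chi7_le)

lemma chi7_block_1_sums: "chi7_block 1 sums (pi / sqrt 7)"
proof -
  have pf: "(\<lambda>k. 1 / real (7 * k + j) - 1 / real (7 * k + (7 - j))) sums (pi / 7 * cot (pi * j / 7))"
    if "0 < j" "j < 7" for j :: nat
  proof -
    have lim: "(\<lambda>k. 1/7 * (1 / (real k + j / 7) - 1 / (real k + (1 - j / 7))))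
                 sums (1/7 * (pi * cot (pi * (j / 7))))"
      using that by (intro sums_mult pi_cot_partial_fractions) auto
    have eq: "1/7 * (1 / (real k + j / 7) - 1 / (real k + (1 - j / 7)))
          = 1 / real (7 * k + j) - 1 / real (7 * k + (7 - j))" for k
    proof -
      have "real k + j / 7 = real (7 * k + j) / 7" "real k + (1 - j / 7) = real (7 * k + (7 - j)) / 7"
        using that by (simp_all add: of_nat_diff add_divide_distrib diff_divide_distrib)
      thus ?thesis
        by (simp only:) (simp add: right_diff_distrib del: of_nat_add of_nat_mult)
    qed
    from lim show ?thesis
      unfolding eq by simp
  qed
  have "(\<lambda>k. 1 / real (7 * k + 1) - 1 / real (7 * k + 6)) sums (pi / 7 * cot (pi / 7))"
    using pf[of 1] by simp
  moreover have "(\<lambda>k. 1 / real (7 * k + 2) - 1 / real (7 * k + 5)) sums (pi / 7 * cot (2 * pi / 7))"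
    using pf[of 2] by (simp add: mult.commute)
  moreover have "(\<lambda>k. 1 / real (7 * k + 3) - 1 / real (7 * k + 4)) sums (pi / 7 * cot (3 * pi / 7))"
    using pf[of 3] by (simp add: mult.commute)
  ultimately have "(\<lambda>k. (1 / real (7 * k + 1) - 1 / real (7 * k + 6))
                         + (1 / real (7 * k + 2) - 1 / real (7 * k + 5))
                         - (1 / real (7 * k + 3) - 1 / real (7 * k + 4)))
     sums (pi / 7 * (cot (pi / 7) + cot (2 * pi / 7) - cot (3 * pi / 7)))"
    unfolding distrib_left right_diff_distrib by (intro sums_add sums_diff)
  also have "pi / 7 * (cot (pi / 7) + cot (2 * pi / 7) - cot (3 * pi / 7)) = pi / sqrt 7"
    unfolding cot_pi_sevenths by (simp add: field_simps)
  finally show ?thesis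
    unfolding chi7_block_eq[abs_def] by (simp add: algebra_simps)
qed

lemma abs_chi7_block_le:
  assumes "1 \<le> s" "s \<le> 2"
  shows "\<bar>chi7_block s k\<bar> \<le> 30 / (real k + 1)^2"
proof -
  define u where "u j = 1 / real (7 * k + j) powr s" for j
  have pair: "0 \<le> u a - u b \<and> u a - u b \<le> 10 / (real k + 1)^2" if "1 \<le> a" "a \<le> b" "b \<le> 6" for a b
  proof -
    have "real (7 * k + b) = real (7 * k + a) + real (b - a)"
      using that by simp
    hence "0 \<le> u a - u b \<and> u a - u b \<le> 2 * real (b - a) / real (7 * k + a)^2"
      using inverse_powr_diff_bounds[of "real (7 * k + a)" "real (b - a)" s] assms that
      by (simp add: u_def)
    moreover have "2 * real (b - a) / real (7 * k + a)^2 \<le> 10 / (real k + 1)^2"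
      using that by (intro frac_le power_mono) auto
    ultimately show ?thesis by linarith
  qed
  have "chi7_block s k = (u 1 - u 6) + (u 2 - u 5) - (u 3 - u 4)"
    unfolding chi7_block_eq u_def by simp
  thus ?thesis
    using pair[of 1 6] pair[of 2 5] pair[of 3 4] by auto
qed

lemma continuous_on_suminf_chi7_block: "continuous_on {1..2} (\<lambda>s. \<Sum>k. chi7_block s k)"
proof (rule continuous_on_suminf)
  show "summable (\<lambda>k. 30 / (real k + 1)^2)"
    using summable_mult[OF sums_summable[OF inverse_squares_sums], of 30] by (simp add: add.commute)
  show "continuous_on {1..2} (\<lambda>s. chi7_block s k)" for k
    unfolding chi7_block_eq by (intro continuous_intros) auto
qed (use abs_chi7_block_le in auto)

lemma dirichlet_series_chi7_tendsto: "(dirichlet_series chi7 \<longlongrightarrow> pi / sqrt 7) (at_right 1)"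
proof -
  have "((\<lambda>s. \<Sum>k. chi7_block s k) \<longlongrightarrow> (\<Sum>k. chi7_block 1 k)) (at 1 within {1..2})"
    using continuous_on_suminf_chi7_block by (auto simp: continuous_on_def)
  hence "((\<lambda>s. \<Sum>k. chi7_block s k) \<longlongrightarrow> (\<Sum>k. chi7_block 1 k)) (at_right 1)"
    by (simp add: at_within_Icc_at_right)
  moreover have "\<forall>\<^sub>F s in at_right 1. (\<Sum>k. chi7_block s k) = dirichlet_series chi7 s"
    using eventually_at_right_less[of "1::real"]
    by eventually_elim (simp add: sums_unique[OF chi7_block_sums, symmetric])
  ultimately show ?thesis
    using sums_unique[OF chi7_block_1_sums] by (simp add: tendsto_cong)
qed

section \<open>Euler products\<close>

lemma prime_inverse_powr_bounds:
  assumes "prime p" "s > 0"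
  shows "0 < 1 / real p powr s" "1 / real p powr s < 1"
proof -
  have "real p powr s > 1"
    using assms prime_gt_1_nat[of p] powr_less_mono[of 0 s "real p"] by simp
  thus "0 < 1 / real p powr s" "1 / real p powr s < 1"
    using prime_gt_0_nat[OF assms(1)] by (simp_all add: divide_less_eq)
qed

lemma no_prime_divisor_le_iff:
  fixes n N :: nat
  assumes "0 < n" "n \<le> N"
  shows "(\<forall>q\<in>{p. prime p \<and> p \<le> N}. \<not> q dvd n) \<longleftrightarrow> n = 1"
proof
  assume no_divisor: "\<forall>q\<in>{p. prime p \<and> p \<le> N}. \<not> q dvd n"
  show "n = 1"
  proof (rule ccontr)
    assume "n \<noteq> 1"
    then obtain q where "prime q" "q dvd n"
      using prime_factor_nat by blast
    moreover from this have "q \<le> N"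
      using assms dvd_imp_le[of q n] by simp
    ultimately show False
      using no_divisor by blast
  qed
qed (auto simp: not_prime_1)

locale bounded_completely_multiplicative =
  fixes f :: "nat \<Rightarrow> real"
  assumes mult: "\<And>m n. m > 0 \<Longrightarrow> n > 0 \<Longrightarrow> f (m * n) = f m * f n"
    and one: "f 1 = 1"
    and bounded: "\<And>n. \<bar>f n\<bar> \<le> 1"
begin

definition dirichlet_series_avoiding :: "nat set \<Rightarrow> real \<Rightarrow> real" where
  "dirichlet_series_avoiding Q s = (\<Sum>n. if \<forall>q\<in>Q. \<not> q dvd n then f n / real n powr s else 0)"

lemma summable_abs_terms: "s > 1 \<Longrightarrow> summable (\<lambda>n. \<bar>f n / real n powr s\<bar>)"
  by (rule summable_abs_dirichlet_terms[OF bounded])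

lemma summable_abs_terms_if:
  "s > 1 \<Longrightarrow> summable (\<lambda>n. \<bar>if P n then f n / real n powr s else 0\<bar>)"
  by (rule summable_comparison_test[OF _ summable_abs_terms]) auto

lemma dirichlet_term_mult:
  assumes "p > 0"
  shows "f (p * m) / real (p * m) powr s = f p / real p powr s * (f m / real m powr s)"
  using assms by (cases "m = 0") (simp_all add: mult powr_mult)

lemma dirichlet_series_avoiding_insert:
  assumes "s > 1" "prime p" "p \<notin> Q" "\<forall>q\<in>Q. prime q"
  shows "dirichlet_series_avoiding (insert p Q) s = (1 - f p / real p powr s) * dirichlet_series_avoiding Q s"
proof -
  define h where "h n = (if \<forall>q\<in>Q. \<not> q dvd n then f n / real n powr s else 0)" for n
  have p: "p > 0" using assms prime_gt_0_nat by auto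
  have h: "summable h"
    unfolding h_def[abs_def] using summable_abs_terms_if[OF assms(1)] by (rule summable_rabs_cancel)
  have "q dvd p * m \<longleftrightarrow> q dvd m" if "q \<in> Q" for q m
    using that assms primes_dvd_imp_eq[of q p] by (auto simp: prime_dvd_mult_iff)
  hence h_mult: "h (p * m) = f p / real p powr s * h m" for m
    unfolding h_def using dirichlet_term_mult[OF p] by auto
  text \<open>The multiples of \<open>p\<close> contribute \<open>f p / p powr s\<close> times the whole sum.\<close>
  have "(\<lambda>m. if p dvd p * m then h (p * m) else 0) sums c \<longleftrightarrow> (\<lambda>n. if p dvd n then h n else 0) sums c"
    for c by (rule sums_mono_reindex) (use p in \<open>auto simp: strict_mono_def\<close>)
  moreover have "(\<lambda>m. h (p * m)) sums (\<Sum>m. h (p * m))"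
    unfolding h_mult by (intro summable_sums summable_mult h)
  ultimately have "(\<lambda>n. if p dvd n then h n else 0) sums (\<Sum>m. h (p * m))"
    by simp
  also have "(\<Sum>m. h (p * m)) = f p / real p powr s * (\<Sum>n. h n)"
    unfolding h_mult by (rule suminf_mult[OF h])
  finally have multiples: "(\<lambda>n. if p dvd n then h n else 0) sums (f p / real p powr s * (\<Sum>n. h n))" .
  have "(\<lambda>n. h n - (if p dvd n then h n else 0)) sums ((\<Sum>n. h n) - f p / real p powr s * (\<Sum>n. h n))"
    by (intro sums_diff summable_sums h multiples)
  moreover have "(\<lambda>n. h n - (if p dvd n then h n else 0))
                 = (\<lambda>n. if \<forall>q\<in>insert p Q. \<not> q dvd n then f n / real n powr s else 0)"
    by (auto simp: h_def)
  ultimately show ?thesis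
    unfolding dirichlet_series_avoiding_def h_def[symmetric]
    by (simp add: sums_iff algebra_simps)
qed

lemma dirichlet_series_avoiding_primes:
  assumes "s > 1" "finite Q" "\<forall>q\<in>Q. prime q"
  shows "dirichlet_series_avoiding Q s = (\<Prod>q\<in>Q. 1 - f q / real q powr s) * dirichlet_series f s"
  using assms(2,3)
proof (induction Q rule: finite_induct)
  case empty
  thus ?case by (simp add: dirichlet_series_avoiding_def dirichlet_series_def)
next
  case (insert p Q)
  thus ?case by (simp add: dirichlet_series_avoiding_insert[OF assms(1)])
qed

text \<open>Among \<open>n \<le> N\<close> only \<open>n = 1\<close> avoids all primes up to \<open>N\<close>, so the difference
  to \<open>1\<close> is bounded by the tail \<open>n > N\<close> of an absolutely convergent series.\<close>
lemma dirichlet_series_avoiding_primes_le_tendsto: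
  assumes "s > 1"
  shows "(\<lambda>N. dirichlet_series_avoiding {p. prime p \<and> p \<le> N} s) \<longlonglongrightarrow> 1"
proof -
  define a where "a n = f n / real n powr s" for n
  define r where "r N n = (if \<forall>q\<in>{p. prime p \<and> p \<le> N}. \<not> q dvd n then a n else 0)
                        - (if n = 1 then a n else 0)" for N n
  have a_abs: "summable (\<lambda>n. \<bar>a n\<bar>)"
    unfolding a_def using summable_abs_terms[OF assms] .
  have r_le: "\<bar>r N n\<bar> \<le> \<bar>a n\<bar>" for N n
    unfolding r_def by (cases "n = 1") simp_all
  have r_abs: "summable (\<lambda>n. \<bar>r N n\<bar>)" for N
    by (rule summable_comparison_test[OF _ a_abs]) (use r_le in auto)
  have r_small: "r N n = 0" if "n \<le> N" for N n
    using no_prime_divisor_le_iff[of n N] that by (cases "n = 0") (simp_all add: r_def a_def)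
  have bound: "\<bar>dirichlet_series_avoiding {p. prime p \<and> p \<le> N} s - 1\<bar> \<le> (\<Sum>k. \<bar>a (k + Suc N)\<bar>)"
    for N
  proof -
    have single: "(\<lambda>n. if n = 1 then a n else 0) sums 1"
      using sums_single[of 1 a] one by (simp add: a_def)
    have avoid: "summable (\<lambda>n. if \<forall>q\<in>{p. prime p \<and> p \<le> N}. \<not> q dvd n then a n else 0)"
      unfolding a_def using summable_abs_terms_if[OF assms] by (rule summable_rabs_cancel)
    have "dirichlet_series_avoiding {p. prime p \<and> p \<le> N} s - 1 = (\<Sum>n. r N n)"
      unfolding r_def dirichlet_series_avoiding_def a_def[symmetric]
      using suminf_diff[OF avoid sums_summable[OF single]] sums_unique[OF single] by simp
    also have "\<dots> = (\<Sum>k. r N (k + Suc N))"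
      using suminf_split_initial_segment[OF summable_rabs_cancel[OF r_abs], of N "Suc N"]
      by (simp add: r_small)
    also have "\<bar>\<dots>\<bar> \<le> (\<Sum>k. \<bar>r N (k + Suc N)\<bar>)"
      by (rule summable_rabs) (use summable_ignore_initial_segment[OF r_abs, of N "Suc N"] in simp)
    also have "\<dots> \<le> (\<Sum>k. \<bar>a (k + Suc N)\<bar>)"
      using r_le summable_ignore_initial_segment[OF r_abs, of N "Suc N"]
        summable_ignore_initial_segment[OF a_abs, of "Suc N"]
      by (intro suminf_le) simp_all
    finally show ?thesis .
  qed
  have "(\<lambda>N. \<Sum>k. \<bar>a (k + Suc N)\<bar>) \<longlonglongrightarrow> 0"
    using LIMSEQ_Suc[OF suminf_exist_split2[OF a_abs]] by simp
  hence "(\<lambda>N. dirichlet_series_avoiding {p. prime p \<and> p \<le> N} s - 1) \<longlonglongrightarrow> 0"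
    by (rule Lim_null_comparison[rotated]) (intro always_eventually allI, unfold real_norm_def, rule bound)
  thus ?thesis
    by (simp add: LIM_zero_iff)
qed

lemma euler_factor_nonzero:
  assumes "s > 0" "prime p"
  shows "1 - f p / real p powr s \<noteq> 0"
proof -
  have "\<bar>f p / real p powr s\<bar> < 1"
    using prime_inverse_powr_bounds[OF assms(2,1)] bounded[of p]
    by (simp add: abs_divide divide_less_eq)
  thus ?thesis by linarith
qed

lemma partial_euler_product:
  assumes "s > 1"
  shows "(\<Prod>p\<le>N. if prime p then inverse (1 - f p / real p powr s) else 1)
           * dirichlet_series_avoiding {p. prime p \<and> p \<le> N} s = dirichlet_series f s"
proof -
  define P where "P = (\<Prod>p\<in>{p. prime p \<and> p \<le> N}. 1 - f p / real p powr s)"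
  have "(\<Prod>p\<le>N. if prime p then inverse (1 - f p / real p powr s) else 1)
          = (\<Prod>p\<in>{p. prime p \<and> p \<le> N}. inverse (1 - f p / real p powr s))"
    by (subst prod.inter_filter[symmetric]) (auto intro: prod.cong)
  also have "\<dots> = inverse P"
    using prod_inversef[of "\<lambda>p. 1 - f p / real p powr s"] by (simp add: o_def P_def)
  finally have "(\<Prod>p\<le>N. if prime p then inverse (1 - f p / real p powr s) else 1) = inverse P" .
  moreover have "P \<noteq> 0"
    unfolding P_def using assms euler_factor_nonzero[of s] by (subst prod_zero_iff) auto
  moreover have "dirichlet_series_avoiding {p. prime p \<and> p \<le> N} s = P * dirichlet_series f s"
    unfolding P_def using assms by (intro dirichlet_series_avoiding_primes) auto
  ultimately show ?thesis
    by simp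
qed

lemma dirichlet_series_nonzero:
  assumes "s > 1"
  shows "dirichlet_series f s \<noteq> 0"
proof
  assume "dirichlet_series f s = 0"
  hence "dirichlet_series_avoiding {p. prime p \<and> p \<le> N} s = 0" for N
    using assms by (subst dirichlet_series_avoiding_primes) auto
  with dirichlet_series_avoiding_primes_le_tendsto[OF assms] show False
    by (simp add: LIMSEQ_const_iff)
qed

theorem euler_product:
  assumes "s > 1"
  shows "(\<lambda>p. if prime p then inverse (1 - f p / real p powr s) else 1) has_prod dirichlet_series f s"
proof -
  have "dirichlet_series_avoiding {p. prime p \<and> p \<le> N} s \<noteq> 0" for N
    using partial_euler_product[OF assms, of N] dirichlet_series_nonzero[OF assms] by force
  hence "(\<Prod>p\<le>N. if prime p then inverse (1 - f p / real p powr s) else 1)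
           = dirichlet_series f s / dirichlet_series_avoiding {p. prime p \<and> p \<le> N} s" for N
    using partial_euler_product[OF assms, of N] by (subst nonzero_eq_divide_eq)
  moreover have "(\<lambda>N. dirichlet_series f s / dirichlet_series_avoiding {p. prime p \<and> p \<le> N} s)
                   \<longlonglongrightarrow> dirichlet_series f s / 1"
    by (intro tendsto_divide tendsto_const dirichlet_series_avoiding_primes_le_tendsto assms) simp
  ultimately have "(\<lambda>N. \<Prod>p\<le>N. if prime p then inverse (1 - f p / real p powr s) else 1)
                     \<longlonglongrightarrow> dirichlet_series f s"
    by simp
  with dirichlet_series_nonzero[OF assms] show ?thesis
    unfolding has_prod_def raw_has_prod_def by (simp only: add_0_right) blast
qed

end

section \<open>The pole of zeta at 1\<close>

text \<open>Compare \<open>1 / n powr s\<close> with the telescoping differences of \<open>n powr (1 - s) / (s - 1)\<close>.\<close>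
lemma zeta_residue_bounds:
  assumes "s > 1"
  shows "1 \<le> (s - 1) * zeta s" "(s - 1) * zeta s \<le> s"
proof -
  define w where "w n = real (Suc n) powr (1 - s)" for n
  have "w \<longlonglongrightarrow> 0"
    unfolding w_def using assms
    by (intro tendsto_neg_powr filterlim_compose[OF filterlim_real_sequentially filterlim_Suc]) auto
  hence tel: "(\<lambda>n. w n - w (Suc n)) sums 1"
    using telescope_sums'[of w 0] by (simp add: w_def)
  have "(\<lambda>n. 1 / real n powr s) sums zeta s"
    unfolding dirichlet_series_def using summable_inverse_powr[OF assms] by (simp add: summable_sums)
  hence z1: "(\<lambda>n. 1 / real (Suc n) powr s) sums zeta s"
    by (subst sums_Suc_iff) simp
  hence z2: "(\<lambda>n. 1 / real (Suc (Suc n)) powr s) sums (zeta s - 1)"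
    by (subst sums_Suc_iff) simp
  have step: "(s - 1) / (real (Suc n) + 1) powr s \<le> w n - w (Suc n)"
             "w n - w (Suc n) \<le> (s - 1) / real (Suc n) powr s" for n
    using powr_one_minus_diff_bounds[of "real (Suc n)" s] assms
    by (simp_all add: w_def add.commute)
  have "1 \<le> (s - 1) * zeta s"
    by (rule sums_le[OF _ tel sums_mult[OF z1]]) (use step(2) in simp)
  moreover have "(s - 1) * (zeta s - 1) \<le> 1"
    by (rule sums_le[OF _ sums_mult[OF z2] tel]) (use step(1) in \<open>simp add: add.commute\<close>)
  ultimately show "1 \<le> (s - 1) * zeta s" "(s - 1) * zeta s \<le> s"
    by (simp_all add: algebra_simps)
qed

lemma zeta_residue_tendsto: "((\<lambda>s. (s - 1) * zeta s) \<longlongrightarrow> 1) (at_right 1)"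
proof (rule tendsto_sandwich[where f = "\<lambda>_. 1" and h = "\<lambda>s. s"])
  show "\<forall>\<^sub>F s in at_right 1. 1 \<le> (s - 1) * zeta s"
    using eventually_at_right_less[of "1::real"] by eventually_elim (use zeta_residue_bounds in auto)
  show "\<forall>\<^sub>F s in at_right 1. (s - 1) * zeta s \<le> s"
    using eventually_at_right_less[of "1::real"] by eventually_elim (use zeta_residue_bounds in auto)
qed auto

section \<open>Euler products over residue classes modulo 7\<close>

text \<open>Its Euler product runs over the primes \<open>p \<equiv> 3, 5, 6 (mod 7)\<close>.\<close>
definition nonresidue7_indicator :: "nat \<Rightarrow> real" where
  "nonresidue7_indicator n =
     (if n > 0 \<and> (\<forall>p. prime p \<and> p dvd n \<longrightarrow> p mod 7 \<in> {3, 5, 6}) then 1 else 0)"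

interpretation zeta: bounded_completely_multiplicative "\<lambda>_. 1"
  by unfold_locales auto

interpretation chi7: bounded_completely_multiplicative chi7
  by unfold_locales (simp_all add: chi7_mult abs_chi7_le, simp add: chi7_def)

interpretation nonresidue7: bounded_completely_multiplicative nonresidue7_indicator
  by unfold_locales (auto simp: nonresidue7_indicator_def prime_dvd_mult_iff)

lemma prime_mod_7_cases:
  fixes p :: nat
  assumes "prime p"
  obtains "p = 7" | "p mod 7 \<in> {1, 2, 4}" | "p mod 7 \<in> {3, 5, 6}"
proof -
  consider "p mod 7 = 0" | "p mod 7 \<in> {1, 2, 4}" | "p mod 7 \<in> {3, 5, 6}"
    using less_7_cases[of "p mod 7"] by force
  thus ?thesis
  proof cases
    case 1
    hence "7 dvd p" by (simp add: dvd_eq_mod_eq_0)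
    hence "p = 7" using primes_dvd_imp_eq[of 7 p] assms by simp
    thus ?thesis by (rule that(1))
  qed (fact that(2,3))+
qed

lemma nonresidue7_indicator_prime:
  fixes p :: nat
  assumes "prime p"
  shows "nonresidue7_indicator p = (if p mod 7 \<in> {3, 5, 6} then 1 else 0)"
  using assms primes_dvd_imp_eq[of _ p] prime_gt_0_nat[of p]
  by (auto simp: nonresidue7_indicator_def)

lemma residue7_euler_factor_squared:
  fixes p :: nat
  assumes "prime p" "s > 0"
  shows "(if p mod 7 \<in> {1, 2, 4} then inverse ((1 - 1 / real p powr s)^2) else 1)
         = inverse (1 - 1 / real p powr s) * inverse (1 - chi7 p / real p powr s)
           * (if p = 7 then 1 - 1 / real 7 powr s else 1)
           / inverse (1 - nonresidue7_indicator p / real p powr (2 * s))"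
proof -
  define x where "x = 1 / real p powr s"
  have x: "0 < x" "x < 1"
    unfolding x_def using prime_inverse_powr_bounds[OF assms] by simp_all
  have "real p powr (2 * s) = real p powr s * real p powr s"
    by (simp only: mult_2 powr_add)
  hence x2: "1 / real p powr (2 * s) = x^2"
    by (simp add: x_def power2_eq_square)
  from assms(1) show ?thesis
  proof (cases rule: prime_mod_7_cases)
    case 1
    moreover from this have "1 / 7 powr s = x"
      by (simp add: x_def)
    ultimately show ?thesis
      using x by (simp add: chi7_def nonresidue7_indicator_prime)
  next
    case 2
    hence "p \<noteq> 7" "chi7 p = 1" "nonresidue7_indicator p = 0"
      using assms(1) by (auto simp: chi7_def nonresidue7_indicator_prime)
    thus ?thesis
      using 2 x by (simp add: x_def[symmetric] power2_eq_square)
  next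
    case 3
    hence "p \<noteq> 7" "\<not> p mod 7 \<in> {1, 2, 4}" "chi7 p = -1" "nonresidue7_indicator p = 1"
      using assms(1) by (auto simp: chi7_def nonresidue7_indicator_prime)
    moreover have "(1 - x) * (1 + x) = 1 - x^2"
      by (simp add: algebra_simps power2_eq_square)
    moreover have "x^2 \<noteq> 1"
      using x power_strict_mono[of x 1 2] by simp
    ultimately show ?thesis
      using x by (simp add: x_def[symmetric] x2) (simp add: field_simps)
  qed
qed

lemma residue7_euler_factor:
  fixes p :: nat
  assumes "prime p" "s > 0"
  shows "(if p mod 7 \<in> {1, 2, 4} then inverse (1 - 1 / real p powr s) else 1)
         = inverse (1 - 1 / real p powr s) * (if p = 7 then 1 - 1 / real 7 powr s else 1)
           / inverse (1 - nonresidue7_indicator p / real p powr s)"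
proof -
  define x where "x = 1 / real p powr s"
  have x: "x < 1"
    unfolding x_def using prime_inverse_powr_bounds[OF assms] by simp
  from assms(1) show ?thesis
  proof (cases rule: prime_mod_7_cases)
    case 1
    moreover from this have "1 / 7 powr s = x"
      by (simp add: x_def)
    ultimately show ?thesis
      using x by (simp add: nonresidue7_indicator_prime)
  next
    case 2
    hence "p \<noteq> 7" "nonresidue7_indicator p = 0"
      using assms(1) by (auto simp: nonresidue7_indicator_prime)
    thus ?thesis
      using 2 by (simp add: x_def[symmetric])
  next
    case 3
    hence "p \<noteq> 7" "\<not> p mod 7 \<in> {1, 2, 4}" "nonresidue7_indicator p = 1"
      using assms(1) by (auto simp: nonresidue7_indicator_prime)
    thus ?thesis
      using x by (simp add: x_def[symmetric])
  qed
qed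

lemma has_prod_residue7_squared:
  assumes "s > 1"
  shows "(\<lambda>p. if prime p \<and> p mod 7 \<in> {1, 2, 4} then inverse ((1 - 1 / real p powr s)^2) else 1)
           has_prod (zeta s * dirichlet_series chi7 s * (1 - 1 / real 7 powr s)
                     / dirichlet_series nonresidue7_indicator (2 * s))"
proof -
  have "(\<lambda>p. (if prime p then inverse (1 - 1 / real p powr s) else 1)
            * (if prime p then inverse (1 - chi7 p / real p powr s) else 1)
            * (if p = 7 then 1 - 1 / real 7 powr s else 1)
            / (if prime p then inverse (1 - nonresidue7_indicator p / real p powr (2 * s)) else 1))
          has_prod (zeta s * dirichlet_series chi7 s * (1 - 1 / real 7 powr s)
                    / dirichlet_series nonresidue7_indicator (2 * s))"
    using assms
    by (intro has_prod_divide has_prod_mult zeta.euler_product chi7.euler_product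
              nonresidue7.euler_product has_prod_single[where i = 7 and f = "\<lambda>_. 1 - 1 / real 7 powr s"])
       simp_all
  moreover have "(if prime p \<and> p mod 7 \<in> {1, 2, 4} then inverse ((1 - 1 / real p powr s)^2) else 1)
      = (if prime p then inverse (1 - 1 / real p powr s) else 1)
        * (if prime p then inverse (1 - chi7 p / real p powr s) else 1)
        * (if p = 7 then 1 - 1 / real 7 powr s else 1)
        / (if prime p then inverse (1 - nonresidue7_indicator p / real p powr (2 * s)) else 1)" for p
  proof (cases "prime p")
    case True
    thus ?thesis using residue7_euler_factor_squared[OF True] assms by simp
  next
    case False
    moreover have "prime (7::nat)" by simp
    ultimately show ?thesis by auto
  qed
  ultimately show ?thesis
    by (simp only:)
qed

lemma has_prod_residue7:
  assumes "s > 1"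
  shows "(\<lambda>p. if prime p \<and> p mod 7 \<in> {1, 2, 4} then inverse (1 - 1 / real p powr s) else 1)
           has_prod (zeta s * (1 - 1 / real 7 powr s)
                     / dirichlet_series nonresidue7_indicator s)"
proof -
  have "(\<lambda>p. (if prime p then inverse (1 - 1 / real p powr s) else 1)
            * (if p = 7 then 1 - 1 / real 7 powr s else 1)
            / (if prime p then inverse (1 - nonresidue7_indicator p / real p powr s) else 1))
          has_prod (zeta s * (1 - 1 / real 7 powr s)
                    / dirichlet_series nonresidue7_indicator s)"
    using assms
    by (intro has_prod_divide has_prod_mult zeta.euler_product nonresidue7.euler_product
              has_prod_single[where i = 7 and f = "\<lambda>_. 1 - 1 / real 7 powr s"])
       simp_all
  moreover have "(if prime p \<and> p mod 7 \<in> {1, 2, 4} then inverse (1 - 1 / real p powr s) else 1)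
      = (if prime p then inverse (1 - 1 / real p powr s) else 1)
        * (if p = 7 then 1 - 1 / real 7 powr s else 1)
        / (if prime p then inverse (1 - nonresidue7_indicator p / real p powr s) else 1)" for p
  proof (cases "prime p")
    case True
    thus ?thesis using residue7_euler_factor[OF True] assms by simp
  next
    case False
    moreover have "prime (7::nat)" by simp
    ultimately show ?thesis by auto
  qed
  ultimately show ?thesis
    by (simp only:)
qed

lemma zeta_2: "zeta 2 = pi^2 / 6"
proof -
  have "(\<lambda>n. 1 / real (Suc n) ^ 2) sums (pi^2 / 6)"
    using inverse_squares_sums by (simp add: add.commute)
  hence "(\<lambda>n. 1 / real n ^ 2) sums (pi^2 / 6 + 1 / real 0 ^ 2)"
    by (subst sums_Suc_iff[symmetric]) simp
  hence "(\<lambda>n. 1 / real n powr 2) sums (pi^2 / 6)"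
    by (simp add: powr_numeral)
  thus ?thesis
    unfolding dirichlet_series_def by (simp add: sums_iff)
qed

lemma prodinf_residue7_at_2:
  "(\<Prod>p. if prime p \<and> p mod 7 \<in> {1, 2, 4} then inverse (1 - 1 / (real p)^2) else 1)
     = 8 * pi^2 / (49 * dirichlet_series nonresidue7_indicator 2)"
  using has_prod_unique[OF has_prod_residue7[of 2]] by (simp add: zeta_2 cong: if_cong)

lemma residue7_squared_formula_tendsto:
  "((\<lambda>s. ((s - 1) * zeta s) * dirichlet_series chi7 s * (1 - 1 / real 7 powr s)
          / dirichlet_series nonresidue7_indicator (2 * s))
     \<longlongrightarrow> 6 * pi / (7 * sqrt 7 * dirichlet_series nonresidue7_indicator 2)) (at_right 1)"
proof -
  have "((\<lambda>s. ((s - 1) * zeta s) * dirichlet_series chi7 s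
               * (1 - 1 / real 7 powr s) / dirichlet_series nonresidue7_indicator (2 * s))
         \<longlongrightarrow> 1 * (pi / sqrt 7) * (1 - 1 / real 7 powr 1) / dirichlet_series nonresidue7_indicator (2 * 1))
        (at_right 1)"
    using nonresidue7.dirichlet_series_nonzero[of 2]
    by (intro tendsto_intros zeta_residue_tendsto dirichlet_series_chi7_tendsto
              isCont_tendsto_compose[OF isCont_dirichlet_series[OF nonresidue7.bounded]]) auto
  thus ?thesis
    by (simp add: field_simps)
qed

theorem mainTheorem8:
  shows "((\<lambda>s::real. (s - 1) *
            (\<Prod>p. if prime p \<and> p mod 7 \<in> {1, 2, 4}
                   then inverse ((1 - 1 / (real p powr s))^2) else 1))
          \<longlongrightarrow>
          3 * sqrt 7 / (4 * pi) *
            (\<Prod>p. if prime p \<and> p mod 7 \<in> {1, 2, 4}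
                   then inverse (1 - 1 / (real p)^2) else 1))
         (at_right 1)"
proof -
  let ?B = "dirichlet_series nonresidue7_indicator"
  have "\<forall>\<^sub>F s in at_right 1. ((s - 1) * zeta s) * dirichlet_series chi7 s
           * (1 - 1 / real 7 powr s) / ?B (2 * s)
         = (s - 1) * (\<Prod>p. if prime p \<and> p mod 7 \<in> {1, 2, 4}
                           then inverse ((1 - 1 / (real p powr s))^2) else 1)"
    using eventually_at_right_less[of "1::real"]
    by eventually_elim
       (simp only: has_prod_unique[OF has_prod_residue7_squared, symmetric] mult.assoc times_divide_eq_right)
  moreover have "6 * pi / (7 * sqrt 7 * ?B 2) = 3 * sqrt 7 / (4 * pi) * (8 * pi^2 / (49 * ?B 2))"
    using nonresidue7.dirichlet_series_nonzero[of 2]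
    by (simp add: field_simps power2_eq_square real_sqrt_mult_self)
  ultimately show ?thesis
    unfolding prodinf_residue7_at_2 using residue7_squared_formula_tendsto by (simp add: tendsto_cong)
qed

end
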